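(* (a) For all $y\ge x_0\ge0$, \[F'(y)=\exp\{-y^2/2+x_0^2/2\}F'(x_0)+\int_{x_0}^y\exp\{-y^2/2+z^2/2\}F(z)(F(z)-2)\,dz.\] (b) $\lim_{y\to\infty}e^{y^2/2}\frac{F'(y)}{y^2}=-c_0$. (c) $1<F(0)<2$. (d) $F$ is strictly decreasing on $[0,\infty)$.
   Context: $F:\mathbb{R}\to(0,\infty)$ is defined by $F(x)=V^\infty(1,x)=\lim_{\lambda\to\infty}V^\lambda(1,x)$, where $V^\lambda$ is the solution of $\partial_tV=\frac12\partial_x^2V-\frac12V^2$, $V(0,\cdot)=\lambda\delta_0$. It is known that $F$ is symmetric, $C^2$ on $\mathbb{R}$, positive, and is the unique such function satisfying $\frac{F''(y)}2+\frac y2F'(y)+F(y)-\frac{F(y)^2}2=0$, $F'(0)=0$, and $F(y)\sim c_0ye^{-y^2/2}$ as $y\to\infty$ (ratio tends to one), for some constant $c_0>0$; $c_0$ denotes this constant. *)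

theory Defs
  imports "HOL-Analysis.Analysis"
begin

end

theory Submission
  imports Defs "HOL-Real_Asymp.Real_Asymp"
begin

text \<open>
  The integrating factor \<open>H y = exp (y\<^sup>2/2) * F' y\<close> turns the equation into
  \<open>H' y = exp (y\<^sup>2/2) * F y * (F y - 2)\<close>; integrating gives (a), and l'Hopital's rule for
  \<open>H y / y\<^sup>2\<close> together with \<open>F y \<sim> c0 y exp (- y\<^sup>2/2)\<close> gives (b).
  Since \<open>H 0 = 0\<close>, on \<open>[0, \<infinity>)\<close> the solution moves away from the level 2 as long as it stays on
  one side of it. Because \<open>F \<rightarrow> 0\<close>, this excludes \<open>F 0 > 2\<close>; and \<open>F 0 = 2\<close> would force
  \<open>F = 2\<close> by a Gronwall estimate for \<open>(F - 2)\<^sup>2 + F'\<^sup>2\<close>. Hence \<open>F < 2\<close> on \<open>[0, \<infinity>)\<close>, so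
  \<open>H\<close> and \<open>F'\<close> are negative on \<open>(0, \<infinity>)\<close>, which is (d). Finally \<open>\<Phi> = F' + y F\<close> satisfies
  \<open>\<Phi>' = F (F - 1)\<close> and vanishes at 0 and at infinity; if \<open>F 0 \<le> 1\<close>, then (d) would make
  \<open>\<Phi>\<close> strictly decreasing on \<open>[0, \<infinity>)\<close>, a contradiction.
\<close>

lemma gronwall_differential_ineq:
  fixes g g' :: "real \<Rightarrow> real"
  assumes "a \<le> b"
    and deriv: "\<And>x. a \<le> x \<Longrightarrow> x \<le> b \<Longrightarrow> (g has_real_derivative g' x) (at x)"
    and bound: "\<And>x. a \<le> x \<Longrightarrow> x \<le> b \<Longrightarrow> g' x \<le> C * g x"
  shows "g b \<le> exp (C * (b - a)) * g a"
proof -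
  define k where "k x = exp (- C * x) * g x" for x
  have "k b \<le> k a"
  proof (rule DERIV_nonpos_imp_nonincreasing[OF \<open>a \<le> b\<close>])
    fix x assume x: "a \<le> x" "x \<le> b"
    have "(k has_real_derivative exp (- C * x) * (g' x - C * g x)) (at x)"
      unfolding k_def by (auto intro!: derivative_eq_intros deriv[OF x] simp: algebra_simps)
    moreover have "exp (- C * x) * (g' x - C * g x) \<le> 0"
      using bound[OF x] by (simp add: mult_nonneg_nonpos)
    ultimately show "\<exists>y. DERIV k x :> y \<and> y \<le> 0" by blast
  qed
  then have "exp (C * b) * k b \<le> exp (C * b) * k a" by simp
  moreover have "exp (C * b) * k b = g b"
    by (simp add: k_def mult.assoc[symmetric] exp_add[symmetric])
  moreover have "exp (C * b) * k a = exp (C * (b - a)) * g a"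
    by (simp add: k_def mult.assoc[symmetric] exp_add[symmetric] right_diff_distrib)
  ultimately show ?thesis by simp
qed

lemma first_crossing:
  fixes f :: "real \<Rightarrow> real"
  assumes "a \<le> b" and cont: "continuous_on {a..b} f" and "f a < c" "c \<le> f b"
  obtains t where "a < t" "t \<le> b" "f t = c" "\<And>z. a \<le> z \<Longrightarrow> z < t \<Longrightarrow> f z < c"
proof -
  define S where "S = {a..b} \<inter> f -` {c..}"
  have "closed S"
    unfolding S_def by (intro continuous_closed_preimage cont) auto
  moreover have "b \<in> S" "bdd_below S"
    using assms by (auto simp: S_def bdd_below_def)
  ultimately have tS: "Inf S \<in> S"
    by (intro closed_contains_Inf) auto
  have below: "f z < c" if "a \<le> z" "z < Inf S" for z
  proof (rule ccontr)
    assume "\<not> f z < c"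
    then have "z \<in> S" using that tS by (auto simp: S_def)
    then have "Inf S \<le> z" using \<open>bdd_below S\<close> by (rule cInf_lower)
    with that show False by simp
  qed
  have "a \<le> Inf S" "f a \<le> c" "c \<le> f (Inf S)" "continuous_on {a..Inf S} f"
    using tS \<open>f a < c\<close> by (auto simp: S_def intro: continuous_on_subset[OF cont])
  then obtain z where "a \<le> z" "z \<le> Inf S" "f z = c"
    using IVT' by blast
  with below have "z = Inf S" by force
  with \<open>a \<le> z\<close> \<open>f z = c\<close> \<open>f a < c\<close> have "a < Inf S" "f (Inf S) = c"
    by (auto simp: order.order_iff_strict)
  moreover have "Inf S \<le> b" using tS by (simp add: S_def)
  ultimately show ?thesis using below that by blast
qed

locale profile_ode =
  fixes F F' F'' :: "real \<Rightarrow> real"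
  assumes deriv1: "\<And>x. (F has_real_derivative F' x) (at x)"
    and deriv2: "\<And>x. (F' has_real_derivative F'' x) (at x)"
    and ode: "\<And>y. F'' y / 2 + y / 2 * F' y + F y - (F y)^2 / 2 = 0"
begin

lemma F''_eq: "F'' y = (F y - 2) * F y - y * F' y"
  using ode[of y] by (simp add: field_simps power2_eq_square)

lemma continuous_on_F: "continuous_on S F"
  by (meson DERIV_isCont continuous_at_imp_continuous_on deriv1)

lemma continuous_on_F': "continuous_on S F'"
  by (meson DERIV_isCont continuous_at_imp_continuous_on deriv2)

lemma F'_plus_y_F_deriv: "((\<lambda>y. F' y + y * F y) has_real_derivative F y * (F y - 1)) (at y)"
proof -
  have "((\<lambda>y. F' y + y * F y) has_real_derivative F'' y + (F y + y * F' y)) (at y)"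
    by (auto intro!: derivative_eq_intros deriv1 deriv2)
  then show ?thesis
    by (simp add: F''_eq algebra_simps)
qed

definition H :: "real \<Rightarrow> real" where "H y = exp (y^2 / 2) * F' y"

lemma H_deriv: "(H has_real_derivative exp (y^2 / 2) * (F y * (F y - 2))) (at y)"
proof -
  have "(H has_real_derivative exp (y^2 / 2) * (2 * y / 2) * F' y + exp (y^2 / 2) * F'' y) (at y)"
    unfolding H_def by (auto intro!: derivative_eq_intros deriv2)
  then show ?thesis
    by (simp add: F''_eq algebra_simps)
qed

lemma F'_eq_H: "F' y = exp (- (y^2) / 2) * H y"
  by (simp add: H_def mult.assoc[symmetric] exp_add[symmetric])

lemma F'_integral_eq:
  assumes "x0 \<le> y"
  shows "F' y = exp (- (y^2) / 2 + x0^2 / 2) * F' x0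
           + integral {x0..y} (\<lambda>z. exp (- (y^2) / 2 + z^2 / 2) * F z * (F z - 2))"
proof -
  have "((\<lambda>z. exp (z^2 / 2) * (F z * (F z - 2))) has_integral H y - H x0) {x0..y}"
    using assms H_deriv
    by (intro fundamental_theorem_of_calculus)
       (auto simp: has_real_derivative_iff_has_vector_derivative intro: has_vector_derivative_at_within)
  then have "((\<lambda>z. exp (- (y^2) / 2) * (exp (z^2 / 2) * (F z * (F z - 2))))
               has_integral exp (- (y^2) / 2) * (H y - H x0)) {x0..y}"
    by (rule has_integral_mult_right)
  moreover have "exp (- (y^2) / 2) * (exp (z^2 / 2) * (F z * (F z - 2)))
      = exp (- (y^2) / 2 + z^2 / 2) * F z * (F z - 2)" for z
    by (simp only: exp_add mult.assoc)
  ultimately have "integral {x0..y} (\<lambda>z. exp (- (y^2) / 2 + z^2 / 2) * F z * (F z - 2))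
      = exp (- (y^2) / 2) * H y - exp (- (y^2) / 2) * H x0"
    by (simp add: integral_unique right_diff_distrib)
  moreover have "exp (- (y^2) / 2) * H x0 = exp (- (y^2) / 2 + x0^2 / 2) * F' x0"
    by (simp only: H_def exp_add mult.assoc)
  ultimately show ?thesis
    using F'_eq_H[of y] by linarith
qed

lemma F_eq_2_propagates:
  assumes "0 \<le> x0" "x0 \<le> y" "F x0 = 2" "F' x0 = 0"
  shows "F y = 2"
proof -
  define E where "E z = (F z - 2)^2 + (F' z)^2" for z
  have "bounded ((\<lambda>z. F z + 1) ` {x0..y})"
    by (intro compact_imp_bounded compact_continuous_image continuous_intros continuous_on_F compact_Icc)
  then obtain M where M: "\<And>z. z \<in> {x0..y} \<Longrightarrow> \<bar>F z + 1\<bar> \<le> M"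
    unfolding bounded_real by blast
  have E_deriv: "(E has_real_derivative 2 * F' z * (F z - 2) * (F z + 1) - 2 * z * (F' z)^2) (at z)"
    for z
  proof -
    have "(E has_real_derivative 2 * (F z - 2) * F' z + 2 * F' z * F'' z) (at z)"
      unfolding E_def by (auto intro!: derivative_eq_intros deriv1 deriv2)
    then show ?thesis
      by (simp add: F''_eq algebra_simps power2_eq_square)
  qed
  have E_growth: "2 * F' z * (F z - 2) * (F z + 1) - 2 * z * (F' z)^2 \<le> M * E z"
    if "x0 \<le> z" "z \<le> y" for z
  proof -
    have "2 * F' z * (F z - 2) * (F z + 1) \<le> \<bar>2 * F' z * (F z - 2) * (F z + 1)\<bar>"
      by (rule abs_ge_self)
    also have "\<dots> = \<bar>F z + 1\<bar> * (2 * \<bar>F' z\<bar> * \<bar>F z - 2\<bar>)"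
      by (simp only: abs_mult abs_numeral mult_ac)
    also have "\<dots> \<le> \<bar>F z + 1\<bar> * E z"
      using sum_squares_bound[of "\<bar>F' z\<bar>" "\<bar>F z - 2\<bar>"]
      by (intro mult_left_mono) (auto simp: E_def)
    also have "\<dots> \<le> M * E z"
      using M[of z] that by (intro mult_right_mono) (auto simp: E_def)
    finally have "2 * F' z * (F z - 2) * (F z + 1) \<le> M * E z" .
    moreover have "0 \<le> 2 * z * (F' z)^2"
      using that \<open>0 \<le> x0\<close> by simp
    ultimately show ?thesis
      by linarith
  qed
  have "E y \<le> exp (M * (y - x0)) * E x0"
    using \<open>x0 \<le> y\<close> E_deriv E_growth by (rule gronwall_differential_ineq)
  then have "(F y - 2)^2 + (F' y)^2 \<le> 0"
    using assms(3,4) by (simp add: E_def)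
  then show ?thesis
    by (simp add: sum_power2_le_zero_iff)
qed

end

locale profile = profile_ode +
  fixes c0 :: real
  assumes pos: "\<And>x. F x > 0"
    and d0: "F' 0 = 0"
    and asym: "((\<lambda>y. F y / (c0 * y * exp (- (y^2) / 2))) \<longlongrightarrow> 1) at_top"
begin

lemma tendsto_mult_F:
  assumes "((\<lambda>y. g y * (c0 * y * exp (- (y^2) / 2))) \<longlongrightarrow> L) at_top"
  shows "((\<lambda>y. g y * F y) \<longlongrightarrow> L) at_top"
proof -
  have "(\<lambda>y. c0 * y * exp (- (y^2) / 2)) \<sim>[at_top] F"
    using asym by (rule asymp_equiv_symI[OF asymp_equivI'])
  then have "(\<lambda>y. g y * (c0 * y * exp (- (y^2) / 2))) \<sim>[at_top] (\<lambda>y. g y * F y)"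
    by (rule asymp_equiv_mult[OF asymp_equiv_refl])
  then show ?thesis
    using assms by (rule asymp_equiv_tendsto_transfer)
qed

lemma F_tendsto_0: "(F \<longlongrightarrow> 0) at_top"
proof -
  have "((\<lambda>y::real. y * exp (- (y^2) / 2)) \<longlongrightarrow> 0) at_top"
    by real_asymp
  from tendsto_mult_left[where c = c0, OF this]
  have "((\<lambda>y. 1 * (c0 * y * exp (- (y^2) / 2))) \<longlongrightarrow> 0) at_top"
    by (simp add: mult.assoc)
  then show ?thesis
    using tendsto_mult_F[of "\<lambda>_. 1"] by simp
qed

lemma y_mult_F_tendsto_0: "((\<lambda>y. y * F y) \<longlongrightarrow> 0) at_top"
proof -
  have "((\<lambda>y::real. y * (y * exp (- (y^2) / 2))) \<longlongrightarrow> 0) at_top"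
    by real_asymp
  from tendsto_mult_left[where c = c0, OF this]
  have "((\<lambda>y. y * (c0 * y * exp (- (y^2) / 2))) \<longlongrightarrow> 0) at_top"
    by (simp add: mult_ac)
  then show ?thesis
    by (rule tendsto_mult_F)
qed

lemma H_over_square_tendsto: "((\<lambda>y. exp (y^2 / 2) * F' y / y^2) \<longlongrightarrow> - c0) at_top"
proof -
  define g where "g y = exp (y^2 / 2) * (F y - 2) / (2 * y)" for y
  have "((\<lambda>y. c0 * (F y - 2) / 2) \<longlongrightarrow> - c0) at_top"
    using F_tendsto_0 by (auto intro!: tendsto_eq_intros)
  moreover have "eventually (\<lambda>y. c0 * (F y - 2) / 2 = g y * (c0 * y * exp (- (y^2) / 2))) at_top"
    using eventually_gt_at_top[of 0]
    by eventually_elim (simp add: g_def exp_minus field_simps)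
  ultimately have "((\<lambda>y. g y * (c0 * y * exp (- (y^2) / 2))) \<longlongrightarrow> - c0) at_top"
    by (rule Lim_transform_eventually)
  then have "((\<lambda>y. g y * F y) \<longlongrightarrow> - c0) at_top"
    by (rule tendsto_mult_F)
  then have "((\<lambda>y. exp (y^2 / 2) * (F y * (F y - 2)) / (2 * y)) \<longlongrightarrow> - c0) at_top"
    by (simp add: g_def mult_ac)
  then have "((\<lambda>y. H y / y^2) \<longlongrightarrow> - c0) at_top"
  proof (rule lhospital_at_top_at_top[rotated 4])
    show "filterlim (\<lambda>y::real. y^2) at_top at_top"
      by real_asymp
    show "eventually (\<lambda>y. 2 * y \<noteq> (0::real)) at_top"
      using eventually_gt_at_top[of 0] by eventually_elim simp
    show "eventually (\<lambda>y. (H has_real_derivative exp (y^2 / 2) * (F y * (F y - 2))) (at y)) at_top"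
      using H_deriv by simp
    show "eventually (\<lambda>y. ((\<lambda>y. y^2) has_real_derivative 2 * y) (at y)) at_top"
      by (intro always_eventually allI) (auto intro!: derivative_eq_intros)
  qed
  then show ?thesis
    by (simp add: H_def)
qed

lemma F'_tendsto_0: "(F' \<longlongrightarrow> 0) at_top"
proof -
  have "((\<lambda>y::real. y^2 * exp (- (y^2) / 2)) \<longlongrightarrow> 0) at_top"
    by real_asymp
  with H_over_square_tendsto
  have "((\<lambda>y. (exp (y^2 / 2) * F' y / y^2) * (y^2 * exp (- (y^2) / 2))) \<longlongrightarrow> - c0 * 0) at_top"
    by (rule tendsto_mult)
  moreover have "eventually (\<lambda>y. (exp (y^2 / 2) * F' y / y^2) * (y^2 * exp (- (y^2) / 2)) = F' y) at_top"
    using eventually_gt_at_top[of 0]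
    by eventually_elim (simp add: exp_minus field_simps)
  ultimately show ?thesis
    by (simp add: Lim_transform_eventually)
qed

lemma H_0: "H 0 = 0"
  by (simp add: H_def d0)

lemma obtain_F_lt:
  assumes "0 < c"
  obtains Y where "0 \<le> Y" "F Y < c"
proof -
  have "eventually (\<lambda>y. 0 \<le> y \<and> F y < c) at_top"
    using F_tendsto_0 assms by (intro eventually_conj eventually_ge_at_top order_tendstoD)
  then obtain Y where "0 \<le> Y \<and> F Y < c"
    by (auto simp: eventually_at_top_linorder)
  with that show ?thesis by blast
qed

text \<open>The sign \<open>s\<close> selects the side of 2; \<open>H\<close> starts at 0 and \<open>H'\<close> has the sign of \<open>F - 2\<close>.\<close>

lemma F_moves_away_from_2:
  assumes "0 \<le> t" and side: "\<And>z. 0 \<le> z \<Longrightarrow> z \<le> t \<Longrightarrow> 0 \<le> s * (F z - 2)"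
  shows "0 \<le> s * (F t - F 0)"
proof -
  have sH: "0 \<le> s * H z" if "0 \<le> z" "z \<le> t" for z
  proof -
    have "s * H 0 \<le> s * H z"
    proof (rule DERIV_nonneg_imp_nondecreasing[OF \<open>0 \<le> z\<close>])
      fix x assume x: "0 \<le> x" "x \<le> z"
      have "((\<lambda>y. s * H y) has_real_derivative s * (exp (x^2 / 2) * (F x * (F x - 2)))) (at x)"
        by (intro DERIV_cmult H_deriv)
      moreover have "0 \<le> exp (x^2 / 2) * F x * (s * (F x - 2))"
        using pos[of x] side[of x] x that by simp
      ultimately show "\<exists>y. DERIV (\<lambda>y. s * H y) x :> y \<and> 0 \<le> y"
        by (metis mult.assoc mult.left_commute)
    qed
    then show ?thesis
      by (simp add: H_0)
  qed
  have "s * F 0 \<le> s * F t"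
  proof (rule DERIV_nonneg_imp_nondecreasing[OF \<open>0 \<le> t\<close>])
    fix x assume "0 \<le> x" "x \<le> t"
    then have "0 \<le> exp (- (x^2) / 2) * (s * H x)"
      using sH by simp
    then show "\<exists>y. DERIV (\<lambda>y. s * F y) x :> y \<and> 0 \<le> y"
      by (metis DERIV_cmult deriv1 F'_eq_H mult.left_commute)
  qed
  then show ?thesis
    by (simp add: right_diff_distrib)
qed

lemma F0_not_gt_2: "\<not> 2 < F 0"
proof
  assume F0: "2 < F 0"
  obtain Y where "0 \<le> Y" "F Y < 2"
    using obtain_F_lt[of 2] by auto
  moreover have "continuous_on {0..Y} (\<lambda>y. - F y)"
    by (intro continuous_intros continuous_on_F)
  ultimately obtain t where "0 < t" "F t = 2" and above: "\<And>z. 0 \<le> z \<Longrightarrow> z < t \<Longrightarrow> 2 < F z"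
    using F0 first_crossing[of 0 Y "\<lambda>y. - F y" "- 2"] by auto
  have "0 \<le> 1 * (F t - F 0)"
  proof (rule F_moves_away_from_2)
    fix z assume "0 \<le> z" "z \<le> t"
    with above[of z] \<open>F t = 2\<close> show "0 \<le> 1 * (F z - 2)"
      by (cases "z = t") auto
  qed (use \<open>0 < t\<close> in simp)
  with F0 \<open>F t = 2\<close> show False by simp
qed

lemma F0_ne_2: "F 0 \<noteq> 2"
proof
  assume "F 0 = 2"
  obtain Y where "0 \<le> Y" "F Y < 2"
    using obtain_F_lt[of 2] by auto
  with \<open>F 0 = 2\<close> d0 show False
    using F_eq_2_propagates[of 0 Y] by simp
qed

lemma F0_lt_2: "F 0 < 2"
  using F0_not_gt_2 F0_ne_2 by linarith

lemma F_lt_2: "0 \<le> y \<Longrightarrow> F y < 2"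
proof (rule ccontr)
  assume "0 \<le> y" "\<not> F y < 2"
  moreover have "continuous_on {0..y} F"
    by (rule continuous_on_F)
  ultimately obtain t where "0 < t" "F t = 2" and below: "\<And>z. 0 \<le> z \<Longrightarrow> z < t \<Longrightarrow> F z < 2"
    using F0_lt_2 first_crossing[of 0 y F 2] by auto
  have "0 \<le> - 1 * (F t - F 0)"
  proof (rule F_moves_away_from_2)
    fix z assume "0 \<le> z" "z \<le> t"
    with below[of z] \<open>F t = 2\<close> show "0 \<le> - 1 * (F z - 2)"
      by (cases "z = t") auto
  qed (use \<open>0 < t\<close> in simp)
  with F0_lt_2 \<open>F t = 2\<close> show False by simp
qed

lemma F'_neg: "0 < y \<Longrightarrow> F' y < 0"
proof -
  assume "0 < y"
  have "H y < H 0"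
  proof (rule DERIV_neg_imp_decreasing[OF \<open>0 < y\<close>])
    fix x :: real assume "0 \<le> x" "x \<le> y"
    then have "exp (x^2 / 2) * (F x * (F x - 2)) < 0"
      using F_lt_2[of x] pos[of x] by (simp add: mult_pos_neg)
    then show "\<exists>z. DERIV H x :> z \<and> z < 0"
      using H_deriv by blast
  qed
  then show ?thesis
    using F'_eq_H[of y] by (simp add: H_0 mult_pos_neg)
qed

lemma F_strict_decreasing:
  assumes "0 \<le> x" "x < y"
  shows "F y < F x"
proof (rule DERIV_neg_imp_decreasing_open[OF \<open>x < y\<close> _ continuous_on_F])
  fix z assume "x < z" "z < y"
  with \<open>0 \<le> x\<close> have "F' z < 0"
    by (intro F'_neg) simp
  then show "\<exists>w. DERIV F z :> w \<and> w < 0"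
    using deriv1 by blast
qed

lemma F0_gt_1: "1 < F 0"
proof (rule ccontr)
  assume "\<not> 1 < F 0"
  define \<Phi> where "\<Phi> y = F' y + y * F y" for y
  have \<Phi>_deriv_neg: "\<exists>w. DERIV \<Phi> x :> w \<and> w < 0" if "0 < x" for x
  proof -
    have "F x < 1"
      using F_strict_decreasing[of 0 x] that \<open>\<not> 1 < F 0\<close> by simp
    then have "F x * (F x - 1) < 0"
      using pos[of x] by (simp add: mult_pos_neg)
    then show ?thesis
      using F'_plus_y_F_deriv[of x] unfolding \<Phi>_def by blast
  qed
  have "continuous_on {0..1} \<Phi>"
    unfolding \<Phi>_def by (intro continuous_intros continuous_on_F continuous_on_F')
  then have "\<Phi> 1 < \<Phi> 0"
    using \<Phi>_deriv_neg DERIV_neg_imp_decreasing_open[of 0 1 \<Phi>] by simp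
  then have "\<Phi> 1 < 0"
    by (simp add: \<Phi>_def d0)
  moreover have "eventually (\<lambda>y. \<Phi> y \<le> \<Phi> 1) at_top"
    using eventually_ge_at_top[of 1]
  proof eventually_elim
    case (elim y)
    show ?case
    proof (rule DERIV_nonpos_imp_nonincreasing[OF elim])
      fix x :: real assume "1 \<le> x"
      then obtain w where "DERIV \<Phi> x :> w" "w < 0"
        using \<Phi>_deriv_neg[of x] by auto
      then show "\<exists>w. DERIV \<Phi> x :> w \<and> w \<le> 0"
        by (auto intro: less_imp_le)
    qed
  qed
  moreover have "(\<Phi> \<longlongrightarrow> 0) at_top"
    unfolding \<Phi>_def using tendsto_add[OF F'_tendsto_0 y_mult_F_tendsto_0] by simp
  ultimately show False
    using tendsto_upperbound[of \<Phi> 0 at_top "\<Phi> 1"] by simp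
qed

end

theorem lemma3p2:
  fixes F F' F'' :: "real \<Rightarrow> real" and c0 :: real
  assumes deriv1: "\<And>x. (F has_real_derivative F' x) (at x)"
    and deriv2: "\<And>x. (F' has_real_derivative F'' x) (at x)"
    and cont2: "continuous_on UNIV F''"
    and sym: "\<And>x. F (- x) = F x"
    and pos: "\<And>x. F x > 0"
    and ode: "\<And>y. F'' y / 2 + y / 2 * F' y + F y - (F y)^2 / 2 = 0"
    and d0: "F' 0 = 0"
    and c0_pos: "c0 > 0"
    and asym: "((\<lambda>y. F y / (c0 * y * exp (- (y^2) / 2))) \<longlongrightarrow> 1) at_top"
  shows "(\<forall>x0 y. 0 \<le> x0 \<and> x0 \<le> y \<longrightarrow>
            F' y = exp (- (y^2) / 2 + x0^2 / 2) * F' x0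
                   + integral {x0..y} (\<lambda>z. exp (- (y^2) / 2 + z^2 / 2) * F z * (F z - 2)))
       \<and> ((\<lambda>y. exp (y^2 / 2) * F' y / y^2) \<longlongrightarrow> - c0) at_top
       \<and> 1 < F 0 \<and> F 0 < 2
       \<and> (\<forall>x y. 0 \<le> x \<and> x < y \<longrightarrow> F y < F x)"
proof -
  interpret profile F F' F'' c0
    using deriv1 deriv2 ode pos d0 asym by unfold_locales
  show ?thesis
    using F'_integral_eq H_over_square_tendsto F0_gt_1 F0_lt_2 F_strict_decreasing by blast
qed

end
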